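(* Let $N$ qudits (each $\mathbb{C}^N$) be in the $N$-singlet $|S^{(N)}_N(\boldsymbol\alpha^{(0)})\rangle$, where $\boldsymbol\alpha^{(0)}=\{|\alpha^{(0)}_i\rangle\}_{i=1}^N$ is an orthonormal basis. For $m=1,\dots,M$ (with $M<N$), party $m$ measures qudit $m$ in an orthonormal basis $B_m=\{|\alpha^{(m)}_i\rangle\}_{i=1}^N$, where $|\alpha^{(m)}_i\rangle=U^{(m)}|\alpha^{(m-1)}_i\rangle$. Here $U^{(1)}$ is an arbitrary unitary on $\mathbb{C}^N$. For $m\ge2$, let $n_1,\dots,n_{m-1}$ be the indices of the outcomes already obtained; then $U^{(m)}$ is an arbitrary unitary that acts as the identity on each $|\alpha^{(m-1)}_{n_k}\rangle$, $k<m$, and maps the span of the remaining $N-m+1$ vectors $\{|\alpha^{(m-1)}_i\rangle\}_{i\notin\{n_1,\dots,n_{m-1}\}}$ into itself. Whatever the outcomes $|\alpha^{(m)}_{n_m}\rangle$, the final state is, up to a global phase, $$|\alpha^{(1)}_{n_1}\rangle_1\cdots|\alpha^{(M)}_{n_M}\rangle_M\otimes|S^{(N-M)}_{N-M}(\boldsymbol\alpha^{(M)};n_1,\dots,n_M)\rangle_{M+1,\dots,N}.$$ That is, the unmeasured parties share an $(N-M)$-singlet written in the basis $B_M$ with the levels $|\alpha^{(M)}_{n_1}\rangle,\dots,|\alpha^{(M)}_{n_M}\rangle$ excluded.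
   Context: For an orthonormal basis $\boldsymbol\alpha=\{|\alpha_i\rangle\}_{i=1}^N$ of $\mathbb{C}^N$, the $N$-singlet is $|S^{(N)}_N(\boldsymbol\alpha)\rangle=\frac{1}{\sqrt{N!}}\sum_{\pi\in S_N}\operatorname{sgn}(\pi)|\alpha_{\pi(1)},\dots,\alpha_{\pi(N)}\rangle$. For a set $\{n_1,\dots,n_M\}$ of distinct indices, $|S^{(N-M)}_{N-M}(\boldsymbol\alpha;n_1,\dots,n_M)\rangle$ denotes the totally antisymmetric normalized state of $N-M$ qudits built from the basis vectors $\{|\alpha_i\rangle\}_{i\notin\{n_1,\dots,n_M\}}$: $\frac{1}{\sqrt{(N-M)!}}\sum_\sigma\operatorname{sgn}(\sigma)|\alpha_{\sigma(1)},\dots,\alpha_{\sigma(N-M)}\rangle$, where $\sigma$ ranges over bijections onto the complementary index set. *)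

theory Defs
  imports Complex_Main "HOL-Combinatorics.Permutations" "HOL-Library.FuncSet"
begin

text \<open>Vectors of C^N: functions nat => complex, components indexed by 0..<N (zero beyond).
  Basis vectors / outcome labels and qudit positions are indexed by 1..N as in the paper.\<close>

definition cinner :: "nat \<Rightarrow> (nat \<Rightarrow> complex) \<Rightarrow> (nat \<Rightarrow> complex) \<Rightarrow> complex" where
  "cinner N v w = (\<Sum>j<N. cnj (v j) * w j)"

definition is_vec :: "nat \<Rightarrow> (nat \<Rightarrow> complex) \<Rightarrow> bool" where
  "is_vec N v \<longleftrightarrow> (\<forall>j\<ge>N. v j = 0)"

definition onb :: "nat \<Rightarrow> (nat \<Rightarrow> nat \<Rightarrow> complex) \<Rightarrow> bool" where
  "onb N a \<longleftrightarrow> (\<forall>i\<in>{1..N}. is_vec N (a i))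
     \<and> (\<forall>i\<in>{1..N}. \<forall>k\<in>{1..N}. cinner N (a i) (a k) = (if i = k then 1 else 0))
     \<and> (\<forall>v. is_vec N v \<longrightarrow> (\<exists>c. v = (\<lambda>j. \<Sum>i\<in>{1..N}. c i * a i j)))"

definition mat_app :: "nat \<Rightarrow> (nat \<Rightarrow> nat \<Rightarrow> complex) \<Rightarrow> (nat \<Rightarrow> complex) \<Rightarrow> nat \<Rightarrow> complex" where
  "mat_app N U v = (\<lambda>j. if j < N then (\<Sum>k<N. U j k * v k) else 0)"

definition is_unitary :: "nat \<Rightarrow> (nat \<Rightarrow> nat \<Rightarrow> complex) \<Rightarrow> bool" where
  "is_unitary N U \<longleftrightarrow> (\<forall>i<N. \<forall>j<N. (\<Sum>k<N. cnj (U k i) * U k j) = (if i = j then 1 else 0))"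

text \<open>States of N qudits: amplitude functions on configurations x, where x k (k in 1..N)
  is the computational-basis level (0..<N) of qudit k.\<close>
definition cfgs :: "nat \<Rightarrow> (nat \<Rightarrow> nat) set" where
  "cfgs N = ({1..N} \<rightarrow>\<^sub>E {..<N})"

definition snorm :: "nat \<Rightarrow> ((nat \<Rightarrow> nat) \<Rightarrow> complex) \<Rightarrow> real" where
  "snorm N \<Psi> = sqrt (\<Sum>x\<in>cfgs N. (cmod (\<Psi> x))\<^sup>2)"

definition singlet :: "nat \<Rightarrow> (nat \<Rightarrow> nat \<Rightarrow> complex) \<Rightarrow> (nat \<Rightarrow> nat) \<Rightarrow> complex" where
  "singlet N a = (\<lambda>x. complex_of_real (1 / sqrt (fact N)) *
     (\<Sum>\<pi>\<in>{\<pi>. \<pi> permutes {1..N}}. of_int (sign \<pi>) * (\<Prod>k\<in>{1..N}. a (\<pi> k) (x k))))"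

text \<open>Sign of a bijection between two finite sets of naturals, both ordered increasingly
  (i.e. the sign of the induced permutation): (-1)^(number of inversions).\<close>
definition bij_sign :: "nat set \<Rightarrow> (nat \<Rightarrow> nat) \<Rightarrow> complex" where
  "bij_sign P \<sigma> = (-1) ^ card {(p, q). p \<in> P \<and> q \<in> P \<and> p < q \<and> \<sigma> q < \<sigma> p}"

text \<open>Totally antisymmetric normalized state on the qudits P built from the basis vectors
  a i, i in I (card P = card I).\<close>
definition sub_singlet :: "nat set \<Rightarrow> nat set \<Rightarrow> (nat \<Rightarrow> nat \<Rightarrow> complex) \<Rightarrow> (nat \<Rightarrow> nat) \<Rightarrow> complex" where
  "sub_singlet P I a = (\<lambda>x. complex_of_real (1 / sqrt (fact (card I))) *
     (\<Sum>\<sigma>\<in>{\<sigma>. \<sigma> \<in> P \<rightarrow>\<^sub>E I \<and> bij_betw \<sigma> P I}. bij_sign P \<sigma> * (\<Prod>k\<in>P. a (\<sigma> k) (x k))))"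

definition qproj :: "nat \<Rightarrow> nat \<Rightarrow> (nat \<Rightarrow> complex) \<Rightarrow> ((nat \<Rightarrow> nat) \<Rightarrow> complex) \<Rightarrow> (nat \<Rightarrow> nat) \<Rightarrow> complex" where
  "qproj N k b \<Psi> = (\<lambda>x. b (x k) * (\<Sum>j<N. cnj (b j) * \<Psi> (x(k := j))))"

text \<open>Unnormalized state after parties 1..m obtained outcomes a 1 (n 1), ..., a m (n m)
  on qudits 1..m (sequential projective measurements).\<close>
fun meas_seq :: "nat \<Rightarrow> (nat \<Rightarrow> nat \<Rightarrow> nat \<Rightarrow> complex) \<Rightarrow> (nat \<Rightarrow> nat) \<Rightarrow> nat
                 \<Rightarrow> ((nat \<Rightarrow> nat) \<Rightarrow> complex) \<Rightarrow> (nat \<Rightarrow> nat) \<Rightarrow> complex" where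
  "meas_seq N a n 0 \<Psi> = \<Psi>"
| "meas_seq N a n (Suc m) \<Psi> = qproj N (Suc m) (a (Suc m) (n (Suc m))) (meas_seq N a n m \<Psi>)"

end

theory Submission
  imports Defs
begin

text \<open>Work throughout in the final basis \<beta> = \<alpha>(M). Each U(m) fixes the vectors of the outcomes
  already obtained, so every outcome vector \<alpha>(m) n(m) equals \<beta> n(m). In any orthonormal basis the
  singlet is, up to a nonzero factor (a determinant), the antisymmetrised product
  \<Sum>\<pi> sgn \<pi> \<beta>(\<pi> 1) \<otimes> ... \<otimes> \<beta>(\<pi> N), and projecting qudit m onto \<beta> n(m) keeps exactly the terms
  with \<pi> m = n m. The surviving permutations are those agreeing with n on 1..M; their signs are a
  constant of modulus one times the sign of the induced bijection from {M+1..N} onto the unused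
  levels, which yields the product of the outcome vectors with the (N-M)-singlet. Normalising
  leaves a phase. The outcomes are necessarily distinct, since otherwise the state would vanish.\<close>

section \<open>Inversion counts and the sign of a permutation\<close>

definition order_sign :: "nat \<Rightarrow> nat \<Rightarrow> complex" where
  "order_sign u v = (if v < u then -1 else 1)"

definition ordered_pairs :: "nat set \<Rightarrow> (nat \<times> nat) set" where
  "ordered_pairs P = {(p, q). p \<in> P \<and> q \<in> P \<and> p < q}"

lemma finite_ordered_pairs: "finite P \<Longrightarrow> finite (ordered_pairs P)"
  by (rule finite_subset[of _ "P \<times> P"]) (auto simp: ordered_pairs_def)

lemma norm_order_sign [simp]: "cmod (order_sign u v) = 1"
  by (simp add: order_sign_def)

lemma bij_sign_eq_prod_order_sign:
  assumes "finite P"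
  shows "bij_sign P \<sigma> = (\<Prod>(p, q)\<in>ordered_pairs P. order_sign (\<sigma> p) (\<sigma> q))"
proof -
  have "(\<Prod>(p, q)\<in>ordered_pairs P. order_sign (\<sigma> p) (\<sigma> q))
      = (-1) ^ card (ordered_pairs P \<inter> {(p, q). \<sigma> q < \<sigma> p})"
    using assms by (simp add: order_sign_def case_prod_unfold prod.If_cases finite_ordered_pairs)
  also have "ordered_pairs P \<inter> {(p, q). \<sigma> q < \<sigma> p} = {(p, q). p \<in> P \<and> q \<in> P \<and> p < q \<and> \<sigma> q < \<sigma> p}"
    by (auto simp: ordered_pairs_def)
  finally show ?thesis by (simp add: bij_sign_def)
qed

lemma bij_sign_cong: "(\<And>p. p \<in> P \<Longrightarrow> \<sigma> p = \<tau> p) \<Longrightarrow> bij_sign P \<sigma> = bij_sign P \<tau>"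
  unfolding bij_sign_def by (rule arg_cong[where f = "\<lambda>A. (-1) ^ card A"]) auto

definition sorted_image :: "(nat \<Rightarrow> nat) \<Rightarrow> nat \<times> nat \<Rightarrow> nat \<times> nat" where
  "sorted_image f = (\<lambda>(p, q). (min (f p) (f q), max (f p) (f q)))"

lemma bij_betw_sorted_image:
  assumes "bij_betw \<sigma> P I"
  shows "bij_betw (sorted_image \<sigma>) (ordered_pairs P) (ordered_pairs I)"
proof -
  define \<tau> where "\<tau> = inv_into P \<sigma>"
  have \<tau>: "bij_betw \<tau> I P" unfolding \<tau>_def using assms by (rule bij_betw_inv_into)
  have into: "sorted_image f ` ordered_pairs A \<subseteq> ordered_pairs B"
    if f: "bij_betw f A B" for f :: "nat \<Rightarrow> nat" and A B
  proof (rule image_subsetI)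
    fix pq assume "pq \<in> ordered_pairs A"
    then obtain p q where "pq = (p, q)" "p \<in> A" "q \<in> A" "p \<noteq> q" by (auto simp: ordered_pairs_def)
    with f have "f p \<in> B" "f q \<in> B" "f p \<noteq> f q" by (auto simp: bij_betw_def dest: inj_onD)
    then show "sorted_image f pq \<in> ordered_pairs B" using \<open>pq = (p, q)\<close>
      by (auto simp: sorted_image_def ordered_pairs_def min_def max_def)
  qed
  have inverse: "sorted_image g (sorted_image f pq) = pq"
    if gf: "\<And>p. p \<in> A \<Longrightarrow> g (f p) = p" and pq: "pq \<in> ordered_pairs A"
    for f g :: "nat \<Rightarrow> nat" and A pq
  proof -
    obtain p q where "pq = (p, q)" "p \<in> A" "q \<in> A" "p < q"
      using pq by (auto simp: ordered_pairs_def)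
    then show ?thesis using gf by (cases "f p \<le> f q") (auto simp: sorted_image_def min_def max_def)
  qed
  show ?thesis
  proof (rule bij_betw_byWitness[where f' = "sorted_image \<tau>"])
    show "\<forall>pq\<in>ordered_pairs P. sorted_image \<tau> (sorted_image \<sigma> pq) = pq"
      using inverse[where A = P and f = \<sigma> and g = \<tau>] bij_betw_inv_into_left[OF assms]
      by (simp add: \<tau>_def)
    show "\<forall>uv\<in>ordered_pairs I. sorted_image \<sigma> (sorted_image \<tau> uv) = uv"
      using inverse[where A = I and f = \<tau> and g = \<sigma>] bij_betw_inv_into_right[OF assms]
      by (simp add: \<tau>_def)
  qed (use into assms \<tau> in blast)+
qed

lemma bij_sign_comp:
  assumes P: "finite P" and I: "finite I" and \<sigma>: "bij_betw \<sigma> P I" and \<tau>: "inj_on \<tau> I"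
  shows "bij_sign P (\<tau> \<circ> \<sigma>) = bij_sign P \<sigma> * bij_sign I \<tau>"
proof -
  define h where "h u v = order_sign u v * order_sign (\<tau> u) (\<tau> v)" for u v
  have h_sym: "h u v = h v u" if "u \<in> I" "v \<in> I" "u \<noteq> v" for u v
    using that inj_onD[OF \<tau>] by (auto simp: h_def order_sign_def)
  have "bij_sign P (\<tau> \<circ> \<sigma>) = (\<Prod>(p, q)\<in>ordered_pairs P. order_sign (\<sigma> p) (\<sigma> q) * h (\<sigma> p) (\<sigma> q))"
    unfolding bij_sign_eq_prod_order_sign[OF P] h_def
    by (intro prod.cong) (auto simp: order_sign_def)
  also have "\<dots> = bij_sign P \<sigma> * (\<Prod>(p, q)\<in>ordered_pairs P. h (\<sigma> p) (\<sigma> q))"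
    unfolding bij_sign_eq_prod_order_sign[OF P] case_prod_unfold by (rule prod.distrib)
  also have "(\<Prod>(p, q)\<in>ordered_pairs P. h (\<sigma> p) (\<sigma> q)) = (\<Prod>(u, v)\<in>ordered_pairs I. h u v)"
  proof -
    have "(\<Prod>(p, q)\<in>ordered_pairs P. h (\<sigma> p) (\<sigma> q))
        = (\<Prod>pq\<in>ordered_pairs P. (\<lambda>(u, v). h u v) (sorted_image \<sigma> pq))"
    proof (intro prod.cong refl, clarify)
      fix p q assume "(p, q) \<in> ordered_pairs P"
      then have "\<sigma> p \<in> I" "\<sigma> q \<in> I" "\<sigma> p \<noteq> \<sigma> q"
        using \<sigma> by (auto simp: ordered_pairs_def bij_betw_def dest: inj_onD)
      then show "h (\<sigma> p) (\<sigma> q) = (\<lambda>(u, v). h u v) (sorted_image \<sigma> (p, q))"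
        using h_sym by (auto simp: sorted_image_def min_def max_def)
    qed
    also have "\<dots> = (\<Prod>(u, v)\<in>ordered_pairs I. h u v)"
      by (rule prod.reindex_bij_betw[OF bij_betw_sorted_image[OF \<sigma>]])
    finally show ?thesis .
  qed
  also have "(\<Prod>(u, v)\<in>ordered_pairs I. h u v) = bij_sign I \<tau>"
    unfolding bij_sign_eq_prod_order_sign[OF I] h_def
    by (intro prod.cong) (auto simp: ordered_pairs_def order_sign_def)
  finally show ?thesis .
qed

lemma bij_sign_transpose:
  assumes "finite S" "a \<in> S" "b \<in> S" "a < b"
  shows "bij_sign S (Transposition.transpose a b) = -1"
proof -
  define between where "between = {c \<in> S. a < c \<and> c < b}"
  have "{(p, q). p \<in> S \<and> q \<in> S \<and> p < q \<and> Transposition.transpose a b q < Transposition.transpose a b p}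
      = insert (a, b) (Pair a ` between \<union> (\<lambda>c. (c, b)) ` between)"
    using assms by (auto simp: transpose_def between_def split: if_splits)
  moreover have "card (insert (a, b) (Pair a ` between \<union> (\<lambda>c. (c, b)) ` between)) = Suc (2 * card between)"
  proof -
    have "finite between" using assms(1) by (simp add: between_def)
    moreover have "Pair a ` between \<inter> (\<lambda>c. (c, b)) ` between = {}" by (auto simp: between_def)
    moreover have "card (Pair a ` between) = card between" "card ((\<lambda>c. (c, b)) ` between) = card between"
      by (simp_all add: card_image inj_on_def)
    ultimately show ?thesis
      by (subst card_insert_disjoint) (auto simp: between_def card_Un_disjoint)
  qed
  ultimately show ?thesis by (simp add: bij_sign_def)
qed

lemma sign_eq_bij_sign:
  assumes "finite S" and "p permutes S"
  shows "of_int (sign p) = bij_sign S p"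
  using assms(2,1)
proof (induction rule: permutes_induct)
  case id
  have "{(p, q). p \<in> S \<and> q \<in> S \<and> p < q \<and> id q < id (p::nat)} = {}" by auto
  then show ?case unfolding bij_sign_def by (simp only: card.empty power_0) simp
next
  case (swap a b p)
  have "bij_sign S (Transposition.transpose a b \<circ> p) = bij_sign S p * bij_sign S (Transposition.transpose a b)"
    using swap assms(1) by (intro bij_sign_comp permutes_imp_bij inj_on_subset[OF inj_transpose]) auto
  also have "bij_sign S (Transposition.transpose a b) = -1"
    using bij_sign_transpose[OF assms(1), of a b] bij_sign_transpose[OF assms(1), of b a] swap.hyps
    by (cases "a < b") (auto simp: transpose_commute)
  finally have "bij_sign S (Transposition.transpose a b \<circ> p) = - bij_sign S p" by (simp only: mult_minus1_right)
  moreover have "sign (Transposition.transpose a b \<circ> p) = - sign p"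
    using sign_compose[OF permutation_swap_id permutes_imp_permutation[OF assms(1) swap.hyps(4)]] swap.hyps(3)
    by (simp add: sign_swap_id)
  ultimately show ?case using swap.IH by (simp only: of_int_minus)
qed

section \<open>Antisymmetrised products\<close>

text \<open>With C all permutations of S this is the determinant det (b i (x k)), i.e. the unnormalised
  singlet in the basis b.\<close>
definition slater :: "nat set \<Rightarrow> (nat \<Rightarrow> nat \<Rightarrow> complex) \<Rightarrow> (nat \<Rightarrow> nat) set \<Rightarrow> (nat \<Rightarrow> nat) \<Rightarrow> complex" where
  "slater S b C x = (\<Sum>\<pi>\<in>C. of_int (sign \<pi>) * (\<Prod>k\<in>S. b (\<pi> k) (x k)))"

lemma slater_comp_permutes:
  assumes S: "finite S" and p: "p permutes S"
  shows "slater S b {\<pi>. \<pi> permutes S} (x \<circ> p) = of_int (sign p) * slater S b {\<pi>. \<pi> permutes S} x"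
proof -
  have "slater S b {\<pi>. \<pi> permutes S} (x \<circ> p)
      = (\<Sum>\<pi>\<in>{\<pi>. \<pi> permutes S}. of_int (sign (\<pi> \<circ> p)) * (\<Prod>k\<in>S. b (\<pi> (p k)) (x (p k))))"
    unfolding slater_def by (subst sum_permutations_compose_right[OF p]) simp
  also have "\<dots> = (\<Sum>\<pi>\<in>{\<pi>. \<pi> permutes S}. of_int (sign p) * (of_int (sign \<pi>) * (\<Prod>k\<in>S. b (\<pi> k) (x k))))"
  proof (intro sum.cong refl)
    fix \<pi> assume "\<pi> \<in> {\<pi>. \<pi> permutes S}"
    then have "sign (\<pi> \<circ> p) = sign \<pi> * sign p"
      using S p by (simp add: sign_compose permutes_imp_permutation)
    moreover have "(\<Prod>k\<in>S. b (\<pi> (p k)) (x (p k))) = (\<Prod>k\<in>S. b (\<pi> k) (x k))"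
      using prod.permute[OF p, of "\<lambda>k. b (\<pi> k) (x k)"] by simp
    ultimately show "of_int (sign (\<pi> \<circ> p)) * (\<Prod>k\<in>S. b (\<pi> (p k)) (x (p k)))
        = of_int (sign p) * (of_int (sign \<pi>) * (\<Prod>k\<in>S. b (\<pi> k) (x k)))" by simp
  qed
  finally show ?thesis by (simp add: slater_def sum_distrib_left)
qed

lemma slater_eq_0_if_repeated:
  assumes "finite S" "i \<in> S" "j \<in> S" "i \<noteq> j" "x i = x j"
  shows "slater S b {\<pi>. \<pi> permutes S} x = 0"
proof -
  have "x \<circ> Transposition.transpose i j = x"
    using assms by (auto simp: transpose_def)
  then have "slater S b {\<pi>. \<pi> permutes S} x = - slater S b {\<pi>. \<pi> permutes S} x"
    using slater_comp_permutes[OF assms(1) permutes_swap_id[OF assms(2,3)], of b x] assms(4)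
    by (simp add: sign_swap_id)
  then show ?thesis by simp
qed

lemma bij_betw_restrict_permutes:
  assumes "finite S"
  shows "bij_betw (\<lambda>p. restrict p S) {p. p permutes S} {g \<in> S \<rightarrow>\<^sub>E S. inj_on g S}"
proof (rule bij_betw_byWitness[where f' = "\<lambda>g. restrict_id g S"])
  show "\<forall>p\<in>{p. p permutes S}. restrict_id (restrict p S) S = p"
    by (auto simp: fun_eq_iff restrict_id_def permutes_not_in)
  show "\<forall>g\<in>{g \<in> S \<rightarrow>\<^sub>E S. inj_on g S}. restrict (restrict_id g S) S = g"
    by (auto simp: fun_eq_iff restrict_id_def PiE_def extensional_def)
  show "(\<lambda>p. restrict p S) ` {p. p permutes S} \<subseteq> {g \<in> S \<rightarrow>\<^sub>E S. inj_on g S}"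
  proof
    fix g assume "g \<in> (\<lambda>p. restrict p S) ` {p. p permutes S}"
    then obtain p where p: "p permutes S" and g: "g = restrict p S" by auto
    have "inj_on g S" using permutes_inj_on[OF p] by (simp add: g inj_on_def)
    then show "g \<in> {g \<in> S \<rightarrow>\<^sub>E S. inj_on g S}" using p by (simp add: g permutes_in_image)
  qed
  show "(\<lambda>g. restrict_id g S) ` {g \<in> S \<rightarrow>\<^sub>E S. inj_on g S} \<subseteq> {p. p permutes S}"
  proof clarify
    fix g assume "g \<in> S \<rightarrow>\<^sub>E S" "inj_on g S"
    then have "bij_betw g S S"
      using assms by (simp add: bij_betw_def endo_inj_surj PiE_iff image_subset_iff)
    then show "restrict_id g S permutes S" by (rule permutes_restrict_id)
  qed
qed

text \<open>The factor is det c: this is the multiplicativity of the determinant.\<close>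
lemma slater_change_basis:
  assumes S: "finite S" and b: "\<forall>i\<in>S. \<forall>j. b i j = (\<Sum>l\<in>S. c i l * a l j)"
  shows "slater S b {\<pi>. \<pi> permutes S} x
       = slater S c {\<pi>. \<pi> permutes S} id * slater S a {\<pi>. \<pi> permutes S} x"
proof -
  let ?P = "{\<pi>. \<pi> permutes S}" and ?F = "S \<rightarrow>\<^sub>E S"
  let ?A = "\<lambda>g. \<Prod>k\<in>S. a (g k) (x k)"
  have "slater S b ?P x = (\<Sum>\<pi>\<in>?P. of_int (sign \<pi>) * (\<Sum>g\<in>?F. (\<Prod>k\<in>S. c (\<pi> k) (g k)) * ?A g))"
  proof (unfold slater_def, intro sum.cong refl arg_cong2[where f = "(*)"])
    fix \<pi> assume "\<pi> \<in> ?P"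
    then have "(\<Prod>k\<in>S. b (\<pi> k) (x k)) = (\<Prod>k\<in>S. \<Sum>l\<in>S. c (\<pi> k) l * a l (x k))"
      using b by (intro prod.cong) (auto simp: permutes_in_image)
    also have "\<dots> = (\<Sum>g\<in>?F. \<Prod>k\<in>S. c (\<pi> k) (g k) * a (g k) (x k))"
      using S by (rule prod_sum_PiE) (rule S)
    finally show "(\<Prod>k\<in>S. b (\<pi> k) (x k)) = (\<Sum>g\<in>?F. (\<Prod>k\<in>S. c (\<pi> k) (g k)) * ?A g)"
      by (simp add: prod.distrib)
  qed
  also have "\<dots> = (\<Sum>g\<in>?F. slater S c ?P g * ?A g)"
    unfolding slater_def sum_distrib_left sum_distrib_right
    by (subst sum.swap) (simp add: mult.assoc)
  also have "\<dots> = (\<Sum>g\<in>{g \<in> ?F. inj_on g S}. slater S c ?P g * ?A g)"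
  proof (rule sum.mono_neutral_right)
    show "\<forall>g\<in>?F - {g \<in> ?F. inj_on g S}. slater S c ?P g * ?A g = 0"
      using slater_eq_0_if_repeated[OF S] by (auto simp: inj_on_def)
  qed (use S in \<open>auto simp: finite_PiE\<close>)
  also have "\<dots> = (\<Sum>p\<in>?P. slater S c ?P (restrict p S) * ?A (restrict p S))"
    by (rule sum.reindex_bij_betw[OF bij_betw_restrict_permutes[OF S], symmetric])
  also have "\<dots> = (\<Sum>p\<in>?P. slater S c ?P id * (of_int (sign p) * ?A p))"
  proof (intro sum.cong refl)
    fix p assume p: "p \<in> ?P"
    have "slater S c ?P (restrict p S) = slater S c ?P (id \<circ> p)"
      unfolding slater_def by (intro sum.cong refl arg_cong2[where f = "(*)"] prod.cong) auto
    also have "\<dots> = of_int (sign p) * slater S c ?P id"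
      by (rule slater_comp_permutes[OF S]) (use p in simp)
    moreover have "?A (restrict p S) = ?A p" by (intro prod.cong) auto
    ultimately show "slater S c ?P (restrict p S) * ?A (restrict p S) = slater S c ?P id * (of_int (sign p) * ?A p)"
      by simp
  qed
  also have "\<dots> = slater S c ?P id * slater S a ?P x"
    by (simp add: slater_def sum_distrib_left)
  finally show ?thesis .
qed

section \<open>Orthonormal families\<close>

definition orthonormal :: "nat \<Rightarrow> (nat \<Rightarrow> nat \<Rightarrow> complex) \<Rightarrow> bool" where
  "orthonormal N b \<longleftrightarrow> (\<forall>i\<in>{1..N}. is_vec N (b i))
     \<and> (\<forall>i\<in>{1..N}. \<forall>k\<in>{1..N}. cinner N (b i) (b k) = (if i = k then 1 else 0))"

lemma onb_imp_orthonormal: "onb N a \<Longrightarrow> orthonormal N a"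
  by (simp add: onb_def orthonormal_def)

lemma is_vec_mat_app: "is_vec N (mat_app N U v)"
  by (simp add: is_vec_def mat_app_def)

lemma cinner_mat_app_unitary:
  assumes "is_unitary N U"
  shows "cinner N (mat_app N U v) (mat_app N U w) = cinner N v w"
proof -
  have "cinner N (mat_app N U v) (mat_app N U w)
      = (\<Sum>j<N. (\<Sum>a<N. cnj (U j a) * cnj (v a)) * (\<Sum>b<N. U j b * w b))"
    by (simp add: cinner_def mat_app_def)
  also have "\<dots> = (\<Sum>j<N. \<Sum>a<N. \<Sum>b<N. cnj (v a) * w b * (cnj (U j a) * U j b))"
    by (simp only: sum_product) (simp add: mult_ac)
  also have "\<dots> = (\<Sum>a<N. \<Sum>j<N. \<Sum>b<N. cnj (v a) * w b * (cnj (U j a) * U j b))"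
    by (rule sum.swap)
  also have "\<dots> = (\<Sum>a<N. \<Sum>b<N. \<Sum>j<N. cnj (v a) * w b * (cnj (U j a) * U j b))"
    by (intro sum.cong refl sum.swap)
  also have "\<dots> = (\<Sum>a<N. \<Sum>b<N. cnj (v a) * w b * (\<Sum>j<N. cnj (U j a) * U j b))"
    by (simp only: sum_distrib_left)
  also have "\<dots> = (\<Sum>a<N. \<Sum>b<N. if a = b then cnj (v a) * w b else 0)"
    using assms unfolding is_unitary_def by (intro sum.cong refl) auto
  also have "\<dots> = cinner N v w"
    by (simp add: cinner_def)
  finally show ?thesis .
qed

lemma sum_cfgs_prod_orthonormal:
  assumes b: "orthonormal N b" and \<pi>: "\<pi> permutes {1..N}" and \<pi>': "\<pi>' permutes {1..N}"
  shows "(\<Sum>x\<in>cfgs N. \<Prod>k\<in>{1..N}. b (\<pi> k) (x k) * cnj (b (\<pi>' k) (x k))) = (if \<pi> = \<pi>' then 1 else 0)"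
proof -
  have "(\<Sum>x\<in>cfgs N. \<Prod>k\<in>{1..N}. b (\<pi> k) (x k) * cnj (b (\<pi>' k) (x k)))
      = (\<Prod>k\<in>{1..N}. \<Sum>j<N. b (\<pi> k) j * cnj (b (\<pi>' k) j))"
    unfolding cfgs_def by (rule prod_sum_PiE[symmetric]) auto
  also have "\<dots> = (\<Prod>k\<in>{1..N}. if \<pi> k = \<pi>' k then 1 else 0)"
  proof (intro prod.cong refl)
    fix k assume "k \<in> {1..N}"
    then have "\<pi> k \<in> {1..N}" "\<pi>' k \<in> {1..N}" using \<pi> \<pi>' by (simp_all only: permutes_in_image)
    then have "cinner N (b (\<pi>' k)) (b (\<pi> k)) = (if \<pi>' k = \<pi> k then 1 else 0)"
      using b by (simp add: orthonormal_def)
    then show "(\<Sum>j<N. b (\<pi> k) j * cnj (b (\<pi>' k) j)) = (if \<pi> k = \<pi>' k then 1 else 0)"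
      by (auto simp: cinner_def mult.commute)
  qed
  also have "\<dots> = (if \<pi> = \<pi>' then 1 else 0)"
  proof (cases "\<pi> = \<pi>'")
    case False
    then obtain k where "k \<in> {1..N}" "\<pi> k \<noteq> \<pi>' k"
      using \<pi> \<pi>' by (metis permutes_not_in ext)
    then show ?thesis using False by (auto intro: prod_zero)
  qed simp
  finally show ?thesis .
qed

lemma slater_norm_sq:
  assumes b: "orthonormal N b" and C: "C \<subseteq> {\<pi>. \<pi> permutes {1..N}}"
  shows "(\<Sum>x\<in>cfgs N. (cmod (slater {1..N} b C x))\<^sup>2) = card C"
proof -
  let ?s = "\<lambda>\<pi>. of_int (sign \<pi>) :: complex"
  let ?T = "\<lambda>\<pi> \<pi>' x. \<Prod>k\<in>{1..N}. b (\<pi> k) (x k) * cnj (b (\<pi>' k) (x k))"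
  have fin: "finite C" using C finite_permutations[of "{1..N}"] finite_subset by blast
  have "complex_of_real (\<Sum>x\<in>cfgs N. (cmod (slater {1..N} b C x))\<^sup>2)
      = (\<Sum>x\<in>cfgs N. slater {1..N} b C x * cnj (slater {1..N} b C x))"
    unfolding of_real_sum by (intro sum.cong refl) (rule complex_norm_square)
  also have "\<dots> = (\<Sum>x\<in>cfgs N. \<Sum>\<pi>\<in>C. \<Sum>\<pi>'\<in>C. ?s \<pi> * ?s \<pi>' * ?T \<pi> \<pi>' x)"
    unfolding slater_def cnj_sum sum_product
    by (intro sum.cong refl) (simp add: prod.distrib mult_ac)
  also have "\<dots> = (\<Sum>\<pi>\<in>C. \<Sum>\<pi>'\<in>C. ?s \<pi> * ?s \<pi>' * (\<Sum>x\<in>cfgs N. ?T \<pi> \<pi>' x))"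
    by (simp only: sum_distrib_left sum.swap[of _ "cfgs N"])
  also have "\<dots> = (\<Sum>\<pi>\<in>C. \<Sum>\<pi>'\<in>C. if \<pi> = \<pi>' then 1 else 0)"
  proof (intro sum.cong refl)
    fix \<pi> \<pi>' assume "\<pi> \<in> C" "\<pi>' \<in> C"
    then have "(\<Sum>x\<in>cfgs N. ?T \<pi> \<pi>' x) = (if \<pi> = \<pi>' then 1 else 0)"
      using C by (intro sum_cfgs_prod_orthonormal[OF b]) auto
    then show "?s \<pi> * ?s \<pi>' * (\<Sum>x\<in>cfgs N. ?T \<pi> \<pi>' x) = (if \<pi> = \<pi>' then 1 else 0)"
      by (simp flip: of_int_mult)
  qed
  also have "\<dots> = of_nat (card C)"
    using fin by simp
  finally show ?thesis by (metis of_real_eq_iff of_real_of_nat_eq)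
qed

lemma snorm_slater:
  assumes "orthonormal N b" and "C \<subseteq> {\<pi>. \<pi> permutes {1..N}}"
  shows "snorm N (slater {1..N} b C) = sqrt (card C)"
  using slater_norm_sq[OF assms] by (simp add: snorm_def)

lemma snorm_mult: "snorm N (\<lambda>x. c * \<Psi> x) = cmod c * snorm N \<Psi>"
  by (simp add: snorm_def norm_mult power_mult_distrib sum_distrib_left[symmetric] real_sqrt_mult)

lemma mult_div_norm_eq_exp_Arg:
  fixes c :: complex
  assumes "c \<noteq> 0"
  shows "c * z / complex_of_real (cmod c) = exp (\<i> * complex_of_real (Arg c)) * z"
  using assms by (simp add: cis_conv_exp[symmetric] cis_Arg sgn_eq)

lemma singlet_eq_slater:
  assumes a: "onb N a" and b: "orthonormal N b"
  obtains \<kappa> where "\<kappa> \<noteq> 0" and "singlet N a = (\<lambda>x. \<kappa> * slater {1..N} b {\<pi>. \<pi> permutes {1..N}} x)"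
proof -
  let ?S = "{1..N}" and ?P = "{\<pi>. \<pi> permutes {1..N}}"
  have "\<forall>i\<in>?S. \<exists>c. b i = (\<lambda>j. \<Sum>l\<in>?S. c l * a l j)"
    using a b by (simp add: onb_def orthonormal_def)
  then obtain c where "\<forall>i\<in>?S. b i = (\<lambda>j. \<Sum>l\<in>?S. c i l * a l j)"
    by metis
  then have change: "slater ?S b ?P x = slater ?S c ?P id * slater ?S a ?P x" for x
    by (intro slater_change_basis) simp_all
  define d where "d = slater ?S c ?P id"
  have "d \<noteq> 0"
  proof
    assume "d = 0"
    then have "slater ?S b ?P x = 0" for x by (simp only: change d_def[symmetric] mult_zero_left)
    moreover have "card ?P = fact N" by (rule card_permutations) simp_all
    ultimately show False using slater_norm_sq[OF b, of ?P] by simp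
  qed
  have "slater ?S a ?P x = slater ?S b ?P x / d" for x
    using change[of x, folded d_def] \<open>d \<noteq> 0\<close> by simp
  then have "singlet N a x = complex_of_real (1 / sqrt (fact N)) / d * slater ?S b ?P x" for x
    by (simp add: singlet_def slater_def)
  then show thesis
    using \<open>d \<noteq> 0\<close> by (intro that[of "complex_of_real (1 / sqrt (fact N)) / d"]) auto
qed

section \<open>Sequential measurements\<close>

definition perms_agreeing :: "nat set \<Rightarrow> (nat \<Rightarrow> nat) \<Rightarrow> nat \<Rightarrow> (nat \<Rightarrow> nat) set" where
  "perms_agreeing S n m = {\<pi>. \<pi> permutes S \<and> (\<forall>k\<in>{1..m}. \<pi> k = n k)}"

lemma qproj_slater:
  assumes b: "orthonormal N b" and k: "k \<in> {1..N}" and v: "v \<in> {1..N}"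
    and C: "C \<subseteq> {\<pi>. \<pi> permutes {1..N}}"
  shows "qproj N k (b v) (slater {1..N} b C) = slater {1..N} b {\<pi> \<in> C. \<pi> k = v}"
proof
  fix x
  let ?S = "{1..N}"
  let ?R = "\<lambda>\<pi>. of_int (sign \<pi>) * (\<Prod>l\<in>?S - {k}. b (\<pi> l) (x l))"
  have prod_split: "(\<Prod>l\<in>?S. b (\<pi> l) (y l)) = b (\<pi> k) (y k) * (\<Prod>l\<in>?S - {k}. b (\<pi> l) (y l))"
    for \<pi> y using k by (simp add: prod.remove)
  have "(\<Sum>j<N. cnj (b v j) * slater ?S b C (x(k := j)))
      = (\<Sum>j<N. \<Sum>\<pi>\<in>C. ?R \<pi> * (cnj (b v j) * b (\<pi> k) j))"
    unfolding slater_def prod_split by (simp add: sum_distrib_left mult_ac)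
  also have "\<dots> = (\<Sum>\<pi>\<in>C. ?R \<pi> * cinner N (b v) (b (\<pi> k)))"
    by (subst sum.swap) (simp add: cinner_def sum_distrib_left)
  also have "\<dots> = (\<Sum>\<pi>\<in>C. if \<pi> k = v then ?R \<pi> else 0)"
  proof (intro sum.cong refl)
    fix \<pi> assume "\<pi> \<in> C"
    then have "\<pi> permutes ?S" using C by blast
    then have "\<pi> k \<in> ?S" using k by (simp only: permutes_in_image)
    then show "?R \<pi> * cinner N (b v) (b (\<pi> k)) = (if \<pi> k = v then ?R \<pi> else 0)"
      using b v unfolding orthonormal_def by auto
  qed
  finally have "qproj N k (b v) (slater ?S b C) x = b v (x k) * (\<Sum>\<pi>\<in>C. if \<pi> k = v then ?R \<pi> else 0)"
    by (simp add: qproj_def)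
  also have "\<dots> = (\<Sum>\<pi>\<in>C. if \<pi> k = v then of_int (sign \<pi>) * (\<Prod>l\<in>?S. b (\<pi> l) (x l)) else 0)"
    unfolding sum_distrib_left
  proof (intro sum.cong refl)
    fix \<pi> show "b v (x k) * (if \<pi> k = v then ?R \<pi> else 0)
        = (if \<pi> k = v then of_int (sign \<pi>) * (\<Prod>l\<in>?S. b (\<pi> l) (x l)) else 0)"
      using prod_split[of \<pi> x] by auto
  qed
  also have "\<dots> = slater ?S b {\<pi> \<in> C. \<pi> k = v} x"
    unfolding slater_def using finite_subset[OF C finite_permutations[of ?S]]
    by (rule sum.inter_filter[symmetric]) simp
  finally show "qproj N k (b v) (slater ?S b C) x = slater ?S b {\<pi> \<in> C. \<pi> k = v} x" .
qed

lemma meas_seq_mult: "meas_seq N a n m (\<lambda>x. c * \<Psi> x) = (\<lambda>x. c * meas_seq N a n m \<Psi> x)"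
  by (induction m) (simp_all add: qproj_def sum_distrib_left mult_ac)

lemma meas_seq_slater:
  assumes "orthonormal N b" and "m \<le> N"
    and "\<forall>k\<in>{1..m}. a k (n k) = b (n k) \<and> n k \<in> {1..N}"
  shows "meas_seq N a n m (slater {1..N} b {\<pi>. \<pi> permutes {1..N}}) = slater {1..N} b (perms_agreeing {1..N} n m)"
  using assms(2,3)
proof (induction m)
  case 0
  then show ?case by (simp add: perms_agreeing_def)
next
  case (Suc m)
  then have "meas_seq N a n (Suc m) (slater {1..N} b {\<pi>. \<pi> permutes {1..N}})
      = qproj N (Suc m) (b (n (Suc m))) (slater {1..N} b (perms_agreeing {1..N} n m))"
    by simp
  also have "\<dots> = slater {1..N} b {\<pi> \<in> perms_agreeing {1..N} n m. \<pi> (Suc m) = n (Suc m)}"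
    using Suc.prems by (intro qproj_slater assms(1)) (auto simp: perms_agreeing_def)
  also have "{\<pi> \<in> perms_agreeing {1..N} n m. \<pi> (Suc m) = n (Suc m)} = perms_agreeing {1..N} n (Suc m)"
    by (auto simp: perms_agreeing_def le_Suc_eq)
  finally show ?case .
qed

lemma meas_seq_singlet:
  assumes "onb N a0" and "orthonormal N b" and "m \<le> N"
    and "\<forall>k\<in>{1..m}. a k (n k) = b (n k) \<and> n k \<in> {1..N}"
  obtains \<kappa> where "\<kappa> \<noteq> 0"
    and "meas_seq N a n m (singlet N a0) = (\<lambda>x. \<kappa> * slater {1..N} b (perms_agreeing {1..N} n m) x)"
proof -
  obtain \<kappa> where "\<kappa> \<noteq> 0" and "singlet N a0 = (\<lambda>x. \<kappa> * slater {1..N} b {\<pi>. \<pi> permutes {1..N}} x)"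
    using singlet_eq_slater[OF assms(1,2)] by blast
  with meas_seq_slater[of N b m a n] assms(2-4) show thesis
    by (intro that) (simp_all add: meas_seq_mult)
qed

lemma orthonormal_alpha:
  fixes M m :: nat
  assumes "onb N (\<alpha> 0)"
    and "\<forall>m\<in>{1..M}. is_unitary N (U m)"
    and "\<forall>m\<in>{1..M}. \<forall>i\<in>{1..N}. \<alpha> m i = mat_app N (U m) (\<alpha> (m - 1) i)"
    and "m \<le> M"
  shows "orthonormal N (\<alpha> m)"
  using assms(4)
proof (induction m)
  case 0
  show ?case by (rule onb_imp_orthonormal[OF assms(1)])
next
  case (Suc m)
  then have "\<alpha> (Suc m) i = mat_app N (U (Suc m)) (\<alpha> m i)" if "i \<in> {1..N}" for i
    using assms(3) that by simp
  with Suc assms(2) show ?case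
    by (simp add: orthonormal_def is_vec_mat_app cinner_mat_app_unitary)
qed

lemma alpha_outcome_fixed:
  fixes M k :: nat
  assumes "\<forall>m\<in>{1..M}. \<forall>i\<in>{1..N}. \<alpha> m i = mat_app N (U m) (\<alpha> (m - 1) i)"
    and "\<forall>m\<in>{2..M}. \<forall>k\<in>{1..<m}. mat_app N (U m) (\<alpha> (m - 1) (n k)) = \<alpha> (m - 1) (n k)"
    and "\<forall>m\<in>{1..M}. n m \<in> {1..N}"
    and "k \<in> {1..M}"
  shows "\<alpha> M (n k) = \<alpha> k (n k)"
proof -
  have "\<alpha> (k + d) (n k) = \<alpha> k (n k)" if "k + d \<le> M" for d
    using that
  proof (induction d)
    case (Suc d)
    have "\<alpha> (Suc (k + d)) (n k) = mat_app N (U (Suc (k + d))) (\<alpha> (k + d) (n k))"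
      using assms(1)[rule_format, of "Suc (k + d)" "n k"] assms(3,4) Suc.prems by simp
    also have "\<dots> = \<alpha> (k + d) (n k)"
      using assms(2)[rule_format, of "Suc (k + d)" k] assms(4) Suc.prems by simp
    also have "\<dots> = \<alpha> k (n k)"
      using Suc by simp
    finally show ?case by simp
  qed simp
  from this[of "M - k"] show ?thesis using assms(4) by simp
qed

section \<open>Permutations with prescribed values\<close>

definition bijections :: "nat set \<Rightarrow> nat set \<Rightarrow> (nat \<Rightarrow> nat) set" where
  "bijections P I = {\<sigma>. \<sigma> \<in> P \<rightarrow>\<^sub>E I \<and> bij_betw \<sigma> P I}"

lemma inj_on_if_perms_agreeing:
  assumes "\<pi> \<in> perms_agreeing S n M"
  shows "inj_on n {1..M}"
proof (rule inj_onI)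
  fix k l assume "k \<in> {1..M}" "l \<in> {1..M}" "n k = n l"
  with assms have "\<pi> k = \<pi> l" by (simp add: perms_agreeing_def)
  with assms show "k = l" by (auto simp: perms_agreeing_def dest: permutes_inj[THEN injD])
qed

lemma bij_betw_perms_agreeing:
  assumes "\<pi> \<in> perms_agreeing {1..N} n M" and "M \<le> N"
  shows "bij_betw \<pi> {M+1..N} ({1..N} - n ` {1..M})"
proof -
  have \<pi>: "\<pi> permutes {1..N}" and agree: "\<forall>k\<in>{1..M}. \<pi> k = n k"
    using assms by (auto simp: perms_agreeing_def)
  have "\<pi> ` {M+1..N} = \<pi> ` ({1..N} - {1..M})"
    by (rule arg_cong[where f = "image \<pi>"]) auto
  also have "\<dots> = \<pi> ` {1..N} - \<pi> ` {1..M}"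
    using assms(2) by (intro inj_on_image_set_diff[OF permutes_inj_on[OF \<pi>]]) auto
  also have "\<dots> = {1..N} - n ` {1..M}"
    using agree by (simp only: permutes_image[OF \<pi>]) auto
  finally show ?thesis
    using permutes_inj_on[OF \<pi>] by (simp add: bij_betw_def)
qed

lemma bij_betw_restrict_perms_agreeing:
  assumes MN: "M \<le> N" and inj: "inj_on n {1..M}" and n: "n ` {1..M} \<subseteq> {1..N}"
  shows "bij_betw (\<lambda>\<pi>. restrict \<pi> {M+1..N}) (perms_agreeing {1..N} n M)
           (bijections {M+1..N} ({1..N} - n ` {1..M}))"
proof -
  let ?P = "{M+1..N}" and ?I = "{1..N} - n ` {1..M}"
  define extend where "extend \<sigma> k = (if k \<in> {1..M} then n k else if k \<in> ?P then \<sigma> k else k)" for \<sigma> k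
  have positions: "{1..N} = {1..M} \<union> ?P" "{1..M} \<inter> ?P = {}" using MN by auto
  show ?thesis
  proof (rule bij_betw_byWitness[where f' = extend])
    show "\<forall>\<pi>\<in>perms_agreeing {1..N} n M. extend (restrict \<pi> ?P) = \<pi>"
      using positions by (auto simp: fun_eq_iff extend_def perms_agreeing_def permutes_not_in)
    show "\<forall>\<sigma>\<in>bijections ?P ?I. restrict (extend \<sigma>) ?P = \<sigma>"
      by (auto simp: fun_eq_iff extend_def bijections_def PiE_def extensional_def)
    show "(\<lambda>\<pi>. restrict \<pi> ?P) ` perms_agreeing {1..N} n M \<subseteq> bijections ?P ?I"
    proof (rule image_subsetI)
      fix \<pi> assume "\<pi> \<in> perms_agreeing {1..N} n M"
      then have "bij_betw \<pi> ?P ?I" using MN by (rule bij_betw_perms_agreeing)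
      then show "restrict \<pi> ?P \<in> bijections ?P ?I"
        by (auto simp: bijections_def bij_betw_def inj_on_def)
    qed
    show "extend ` bijections ?P ?I \<subseteq> perms_agreeing {1..N} n M"
    proof (rule image_subsetI)
      fix \<sigma> assume "\<sigma> \<in> bijections ?P ?I"
      then have \<sigma>: "bij_betw \<sigma> ?P ?I" by (simp add: bijections_def)
      have "bij_betw (extend \<sigma>) {1..M} (n ` {1..M})"
        using inj_on_imp_bij_betw[OF inj] bij_betw_cong[of "{1..M}" "extend \<sigma>" n]
        by (simp add: extend_def)
      moreover have "bij_betw (extend \<sigma>) ?P ?I"
        using \<sigma> bij_betw_cong[of ?P "extend \<sigma>" \<sigma>] positions(2) by (auto simp: extend_def)
      ultimately have "bij_betw (extend \<sigma>) ({1..M} \<union> ?P) (n ` {1..M} \<union> ?I)"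
        by (rule bij_betw_combine) blast
      moreover have "n ` {1..M} \<union> ?I = {1..N}" using n by blast
      ultimately have "extend \<sigma> permutes {1..N}"
        using positions by (intro bij_imp_permutes) (auto simp: extend_def)
      then show "extend \<sigma> \<in> perms_agreeing {1..N} n M"
        by (simp add: perms_agreeing_def extend_def)
    qed
  qed
qed

lemma card_bijections:
  assumes "finite A" and "finite B" and "card A = card B"
  shows "card (bijections A B) = fact (card A)"
proof -
  have "bij_betw \<sigma> A B" if "\<sigma> \<in> A \<rightarrow>\<^sub>E B" "inj_on \<sigma> A" for \<sigma>
  proof -
    have "\<sigma> ` A \<subseteq> B" "card (\<sigma> ` A) = card B" using that assms by (auto simp: card_image)
    then show ?thesis using that assms by (simp add: bij_betw_def card_subset_eq)
  qed
  then have "bijections A B = {\<sigma> \<in> A \<rightarrow>\<^sub>E B. inj_on \<sigma> A}"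
    by (auto simp: bijections_def bij_betw_def)
  then show ?thesis
    using assms by (simp add: card_inj_on_subset_funcset fact_prod_rev)
qed

lemma card_diff_inj_image:
  assumes "inj_on n {1..M}" and "n ` {1..M} \<subseteq> {1..N}"
  shows "card ({1..N} - n ` {1..M}) = N - M"
  using assms by (simp add: card_Diff_subset card_image)

lemma card_perms_agreeing:
  assumes "M \<le> N" and "inj_on n {1..M}" and "n ` {1..M} \<subseteq> {1..N}"
  shows "card (perms_agreeing {1..N} n M) = fact (N - M)"
proof -
  have "card (perms_agreeing {1..N} n M) = card (bijections {M+1..N} ({1..N} - n ` {1..M}))"
    by (rule bij_betw_same_card[OF bij_betw_restrict_perms_agreeing[OF assms]])
  also have "\<dots> = fact (N - M)"
    using card_bijections[of "{M+1..N}" "{1..N} - n ` {1..M}"] card_diff_inj_image[OF assms(2,3)] by simp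
  finally show ?thesis .
qed

text \<open>Inversions involving one of the first M positions depend only on n, not on \<pi>.\<close>
lemma sign_perms_agreeing:
  assumes MN: "M \<le> N"
  obtains \<epsilon> where "cmod \<epsilon> = 1"
    and "\<And>\<pi>. \<pi> \<in> perms_agreeing {1..N} n M \<Longrightarrow> of_int (sign \<pi>) = \<epsilon> * bij_sign {M+1..N} \<pi>"
proof -
  let ?P = "{M+1..N}" and ?I = "{1..N} - n ` {1..M}"
  define \<epsilon> where "\<epsilon> = (\<Prod>(p, q)\<in>ordered_pairs {1..M}. order_sign (n p) (n q))
                    * (\<Prod>p\<in>{1..M}. \<Prod>i\<in>?I. order_sign (n p) i)"
  have "of_int (sign \<pi>) = \<epsilon> * bij_sign ?P \<pi>" if \<pi>: "\<pi> \<in> perms_agreeing {1..N} n M" for \<pi>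
  proof -
    have \<pi>S: "\<pi> permutes {1..N}" and agree: "\<forall>k\<in>{1..M}. \<pi> k = n k"
      using \<pi> by (auto simp: perms_agreeing_def)
    let ?f = "\<lambda>(p, q). order_sign (\<pi> p) (\<pi> q)"
    have pairs: "ordered_pairs {1..N} = (ordered_pairs {1..M} \<union> {1..M} \<times> ?P) \<union> ordered_pairs ?P"
      using MN by (auto simp: ordered_pairs_def)
    have "of_int (sign \<pi>) = prod ?f (ordered_pairs {1..N})"
      using sign_eq_bij_sign[OF _ \<pi>S] bij_sign_eq_prod_order_sign[of "{1..N}" \<pi>] by simp
    also have "\<dots> = prod ?f (ordered_pairs {1..M}) * prod ?f ({1..M} \<times> ?P) * prod ?f (ordered_pairs ?P)"
    proof -
      have "finite (ordered_pairs {1..M})" "finite ({1..M} \<times> ?P)" "finite (ordered_pairs ?P)"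
        by (simp_all add: finite_ordered_pairs)
      moreover have "(ordered_pairs {1..M} \<union> {1..M} \<times> ?P) \<inter> ordered_pairs ?P = {}"
        "ordered_pairs {1..M} \<inter> {1..M} \<times> ?P = {}"
        by (auto simp: ordered_pairs_def)
      ultimately show ?thesis unfolding pairs by (simp add: prod.union_disjoint)
    qed
    also have "prod ?f (ordered_pairs {1..M}) = (\<Prod>(p, q)\<in>ordered_pairs {1..M}. order_sign (n p) (n q))"
      using agree by (intro prod.cong) (auto simp: ordered_pairs_def)
    also have "prod ?f ({1..M} \<times> ?P) = (\<Prod>p\<in>{1..M}. \<Prod>i\<in>?I. order_sign (n p) i)"
    proof -
      have "prod ?f ({1..M} \<times> ?P) = (\<Prod>p\<in>{1..M}. \<Prod>q\<in>?P. order_sign (n p) (\<pi> q))"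
        using agree by (simp add: prod.cartesian_product) (intro prod.cong refl, auto)
      also have "\<dots> = (\<Prod>p\<in>{1..M}. \<Prod>i\<in>?I. order_sign (n p) i)"
        using bij_betw_perms_agreeing[OF \<pi> MN] by (intro prod.cong refl prod.reindex_bij_betw)
      finally show ?thesis .
    qed
    also have "prod ?f (ordered_pairs ?P) = bij_sign ?P \<pi>"
      by (simp add: bij_sign_eq_prod_order_sign)
    finally show ?thesis by (simp add: \<epsilon>_def)
  qed
  moreover have "cmod \<epsilon> = 1"
    by (simp add: \<epsilon>_def norm_mult case_prod_unfold flip: prod_norm)
  ultimately show thesis using that by blast
qed

lemma slater_perms_agreeing:
  assumes MN: "M \<le> N" and inj: "inj_on n {1..M}" and n: "n ` {1..M} \<subseteq> {1..N}"
  obtains \<epsilon> where "cmod \<epsilon> = 1"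
    and "\<And>x. slater {1..N} b (perms_agreeing {1..N} n M) x
           = \<epsilon> * complex_of_real (sqrt (fact (N - M)))
             * ((\<Prod>m\<in>{1..M}. b (n m) (x m)) * sub_singlet {M+1..N} ({1..N} - n ` {1..M}) b x)"
proof -
  let ?P = "{M+1..N}" and ?I = "{1..N} - n ` {1..M}" and ?C = "perms_agreeing {1..N} n M"
  let ?B = "bijections ?P ?I"
  let ?A = "\<lambda>\<sigma> x. bij_sign ?P \<sigma> * (\<Prod>k\<in>?P. b (\<sigma> k) (x k))"
  obtain \<epsilon> where \<epsilon>: "cmod \<epsilon> = 1" and sign: "\<And>\<pi>. \<pi> \<in> ?C \<Longrightarrow> of_int (sign \<pi>) = \<epsilon> * bij_sign ?P \<pi>"
    using sign_perms_agreeing[where n = n, OF MN] by blast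
  have positions: "{1..N} = {1..M} \<union> ?P" using MN by auto
  have "slater {1..N} b ?C x = \<epsilon> * (\<Prod>m\<in>{1..M}. b (n m) (x m)) * (\<Sum>\<pi>\<in>?C. ?A \<pi> x)" for x
  proof -
    have "of_int (sign \<pi>) * (\<Prod>k\<in>{1..N}. b (\<pi> k) (x k)) = \<epsilon> * (\<Prod>m\<in>{1..M}. b (n m) (x m)) * ?A \<pi> x"
      if \<pi>: "\<pi> \<in> ?C" for \<pi>
    proof -
      have "(\<Prod>k\<in>{1..N}. b (\<pi> k) (x k)) = (\<Prod>k\<in>{1..M}. b (\<pi> k) (x k)) * (\<Prod>k\<in>?P. b (\<pi> k) (x k))"
        unfolding positions by (rule prod.union_disjoint) auto
      also have "(\<Prod>k\<in>{1..M}. b (\<pi> k) (x k)) = (\<Prod>m\<in>{1..M}. b (n m) (x m))"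
        using \<pi> by (simp add: perms_agreeing_def)
      finally show ?thesis using sign[OF \<pi>] by (simp add: mult_ac)
    qed
    then show ?thesis by (simp add: slater_def sum_distrib_left)
  qed
  moreover have "(\<Sum>\<pi>\<in>?C. ?A \<pi> x) = (\<Sum>\<sigma>\<in>?B. ?A \<sigma> x)" for x
  proof -
    have "(\<Sum>\<pi>\<in>?C. ?A \<pi> x) = (\<Sum>\<pi>\<in>?C. ?A (restrict \<pi> ?P) x)"
      by (intro sum.cong refl arg_cong2[where f = "(*)"] bij_sign_cong prod.cong) auto
    also have "\<dots> = (\<Sum>\<sigma>\<in>?B. ?A \<sigma> x)"
      by (rule sum.reindex_bij_betw[OF bij_betw_restrict_perms_agreeing[OF assms]])
    finally show ?thesis .
  qed
  moreover have "(\<Sum>\<sigma>\<in>?B. ?A \<sigma> x) = complex_of_real (sqrt (fact (N - M))) * sub_singlet ?P ?I b x" for x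
    using card_diff_inj_image[OF inj n] by (simp add: sub_singlet_def bijections_def)
  ultimately show thesis
    using \<epsilon> by (intro that) (auto simp: mult_ac)
qed

theorem corollary1:
  fixes N M :: nat and \<alpha> U :: "nat \<Rightarrow> nat \<Rightarrow> nat \<Rightarrow> complex" and n :: "nat \<Rightarrow> nat"
  assumes "M < N"
    and "onb N (\<alpha> 0)"
    and "\<forall>m\<in>{1..M}. is_unitary N (U m)"
    and "\<forall>m\<in>{1..M}. \<forall>i\<in>{1..N}. \<alpha> m i = mat_app N (U m) (\<alpha> (m - 1) i)"
    and "\<forall>m\<in>{2..M}.
           (\<forall>k\<in>{1..<m}. mat_app N (U m) (\<alpha> (m - 1) (n k)) = \<alpha> (m - 1) (n k))
         \<and> (\<forall>i\<in>{1..N} - n ` {1..<m}. \<exists>c. mat_app N (U m) (\<alpha> (m - 1) i)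
                = (\<lambda>j. \<Sum>l\<in>{1..N} - n ` {1..<m}. c l * \<alpha> (m - 1) l j))"
    and "\<forall>m\<in>{1..M}. n m \<in> {1..N}"
    and "\<exists>x\<in>cfgs N. meas_seq N \<alpha> n M (singlet N (\<alpha> 0)) x \<noteq> 0"
  shows "\<exists>\<theta>::real. \<forall>x\<in>cfgs N.
           meas_seq N \<alpha> n M (singlet N (\<alpha> 0)) x
             / complex_of_real (snorm N (meas_seq N \<alpha> n M (singlet N (\<alpha> 0))))
           = exp (\<i> * complex_of_real \<theta>) *
             ((\<Prod>m\<in>{1..M}. \<alpha> m (n m) (x m))
              * sub_singlet {M+1..N} ({1..N} - n ` {1..M}) (\<alpha> M) x)"
proof -
  let ?S = "{1..N}" and ?C = "perms_agreeing {1..N} n M"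
  define \<Phi> where "\<Phi> = meas_seq N \<alpha> n M (singlet N (\<alpha> 0))"
  define R where "R x = (\<Prod>m\<in>{1..M}. \<alpha> m (n m) (x m)) * sub_singlet {M+1..N} (?S - n ` {1..M}) (\<alpha> M) x" for x
  have MN: "M \<le> N" and n: "n ` {1..M} \<subseteq> ?S" using assms(1,6) by auto
  have C: "?C \<subseteq> {\<pi>. \<pi> permutes ?S}" by (auto simp: perms_agreeing_def)
  have \<beta>: "orthonormal N (\<alpha> M)"
    using assms(2,3,4) by (rule orthonormal_alpha) simp
  have outcome: "\<forall>k\<in>{1..M}. \<alpha> k (n k) = \<alpha> M (n k) \<and> n k \<in> ?S"
    using alpha_outcome_fixed[OF assms(4) _ assms(6)] assms(5,6) by simp
  obtain \<kappa> where "\<kappa> \<noteq> 0" and \<Phi>: "\<Phi> = (\<lambda>x. \<kappa> * slater ?S (\<alpha> M) ?C x)"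
    unfolding \<Phi>_def using meas_seq_singlet[of N "\<alpha> 0" "\<alpha> M" M \<alpha> n, OF assms(2) \<beta> MN outcome] by blast
  then obtain \<pi> where "\<pi> \<in> ?C"
    using assms(7) by (force simp: \<Phi>_def slater_def)
  then have inj: "inj_on n {1..M}" by (rule inj_on_if_perms_agreeing)
  obtain \<epsilon> where "cmod \<epsilon> = 1" and factor: "\<And>x. slater ?S (\<alpha> M) ?C x
      = \<epsilon> * complex_of_real (sqrt (fact (N - M)))
        * ((\<Prod>m\<in>{1..M}. \<alpha> M (n m) (x m)) * sub_singlet {M+1..N} (?S - n ` {1..M}) (\<alpha> M) x)"
    using slater_perms_agreeing[OF MN inj n] by blast
  define c where "c = \<kappa> * \<epsilon> * complex_of_real (sqrt (fact (N - M)))"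
  have "\<Phi> x = c * R x" for x
    unfolding \<Phi> factor R_def c_def using outcome by (simp add: mult_ac)
  moreover have "snorm N \<Phi> = cmod c"
    unfolding \<Phi> snorm_mult snorm_slater[OF \<beta> C] card_perms_agreeing[OF MN inj n] c_def
    using \<open>cmod \<epsilon> = 1\<close> by (simp add: norm_mult)
  moreover have "c \<noteq> 0" using \<open>\<kappa> \<noteq> 0\<close> \<open>cmod \<epsilon> = 1\<close> by (auto simp: c_def)
  ultimately show ?thesis
    unfolding \<Phi>_def[symmetric] R_def[symmetric] by (auto simp: mult_div_norm_eq_exp_Arg)
qed

end
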